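(* Consider a CRN having at least one conservation law with all entries strictly positive, and let $\{\mathbf x_i\}$ denote its conservation laws. Let $A=(\mathcal S_A,\mathcal R_A)$ be a MAS with core set $A_C$ such that $|\mathcal S_A|=|A_C|+1$, and let $T$ be its FWMC partition. Then the species-productive cone of $A$ equals its partition-productive cone: $\mathcal P(A)=\mathcal Q(T)$.
   Context: A chemical reaction network (CRN) consists of a finite species set $\mathcal S$ and a finite set $\mathcal R$ of reactions; each reaction $r$ is written $r^-\to r^+$ with input complex $r^-\in\mathbb Z_{\ge0}^{\mathcal S}$ and output complex $r^+\in\mathbb Z_{\ge0}^{\mathcal S}$. The input and output matrices $\mathbb S^-,\mathbb S^+$ have columns $r^-$, resp. $r^+$; the stoichiometric matrix is $\mathbb S=\mathbb S^+-\mathbb S^-$. A conservation law is a vector $\mathbf x\in\mathbb R^{\mathcal S}$ with $\mathbf x^T\mathbb S=\mathbf0$. $(\mathbb A)_M^N$ denotes the submatrix with rows in $M$ and columns in $N$. $\mathbf v\gg\mathbf 0$ means all entries $>0$; $\mathbf v>\mathbf 0$ means all entries $\ge0$ and $\mathbf v\ne\mathbf 0$. A motif $(\mathcal M,\mathcal R')$ ($\mathcal M\subseteq\mathcal S,\mathcal R'\subseteq\mathcal R$) is exclusively autocatalytic if: (i) some $\mathbf v\gg\mathbf0$ in $\mathbb R^{\mathcal R'}$ has $(\mathbb S)_{\mathcal M}^{\mathcal R'}\mathbf v\gg\mathbf 0$; (ii) every row and (iii) every column of $(\mathbb S^-)_{\mathcal M}^{\mathcal R'}$ is semi-positive. An autocatalytic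 core is an exclusively autocatalytic motif $(A_C,\mathcal R_A)$ no proper sub-motif ($\mathcal M'\subseteq A_C$, $\mathcal R''\subseteq\mathcal R_A$) of which is exclusively autocatalytic. The minimal autocatalytic subnetwork (MAS) $A=(\mathcal S_A,\mathcal R_A)$ of a core $(A_C,\mathcal R_A)$ has reaction set $\mathcal R_A$ and species set $\mathcal S_A$ consisting of all species occurring in some input or output complex of a reaction in $\mathcal R_A$; each MAS is assumed to have a unique core. Put $\overline{\mathbb S}=(\mathbb S)_{\mathcal S_A}^{\mathcal R_A}$ and $\overline{\mathbb S}_C=(\mathbb S)_{A_C}^{\mathcal R_A}$ (a square invertible matrix). The species-productive cone is $\mathcal P(A)=\{\overline{\mathbb S}\,\overline{\mathbb S}_C^{-1}\mathbf u:\mathbf u\ge\mathbf0\}\subseteq\mathbb R^{\mathcal S_A}$. FWMC partition $T=\{T_F,T_W,T_{M/C},T_C\}$ of $\mathcal S_A$: the food set $T_F$ consists of species whose row in $\overline{\mathbb S}$ has all entries $\le0$; the waste set $T_W$ those whose row has all entries $\ge0$; the member set those whose row has both positive and negative entries; $T_C=A_C$ (contained in the member set); $T_{M/C}$ = member set minus $A_C$. Partition-productive cone: with $e_i$ the standard basis vectors of $\mathbb R^{\mathcal S_A}$, let $\mathcal B_T=\{-e_f:f\in T_F\}\cup\{e_w:w\in T_W\}\cup\{-e_m,e_m:m\in T_{M/C}\}\cup\{e_c:c\in T_C\}$, and $\mathcal Q(T)=\mathrm{cone}(\mathcal B_T)\cap\{\mathbf y\in\mathbb R^{\mathcal S_A}:\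 \mathbf x_i|_{\mathcal S_A}\cdot\mathbf y=0\ \text{for all } i\}$, where $\mathbf x_i|_{\mathcal S_A}$ is the restriction of $\mathbf x_i$ to the coordinates in $\mathcal S_A$. *)

theory Defs
  imports Complex_Main
begin

text \<open>A CRN over a finite species type 's and a finite reaction type 'r is given by
  its input matrix Sm and output matrix Sp (entries: stoichiometric coefficients).\<close>

definition stoich :: "('s \<Rightarrow> 'r \<Rightarrow> nat) \<Rightarrow> ('s \<Rightarrow> 'r \<Rightarrow> nat) \<Rightarrow> 's \<Rightarrow> 'r \<Rightarrow> real" where
  "stoich Sm Sp s r = real (Sp s r) - real (Sm s r)"

definition conservation_law ::
  "('s::finite \<Rightarrow> 'r \<Rightarrow> nat) \<Rightarrow> ('s \<Rightarrow> 'r \<Rightarrow> nat) \<Rightarrow> ('s \<Rightarrow> real) \<Rightarrow> bool" where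
  "conservation_law Sm Sp x \<longleftrightarrow> (\<forall>r. (\<Sum>s\<in>UNIV. x s * stoich Sm Sp s r) = 0)"

definition excl_autocatalytic ::
  "('s \<Rightarrow> 'r \<Rightarrow> nat) \<Rightarrow> ('s \<Rightarrow> 'r \<Rightarrow> nat) \<Rightarrow> 's set \<Rightarrow> 'r set \<Rightarrow> bool" where
  "excl_autocatalytic Sm Sp M R' \<longleftrightarrow>
     M \<noteq> {} \<and> R' \<noteq> {} \<and>
     (\<exists>v::'r \<Rightarrow> real. (\<forall>r\<in>R'. v r > 0) \<and>
        (\<forall>m\<in>M. (\<Sum>r\<in>R'. stoich Sm Sp m r * v r) > 0)) \<and>
     (\<forall>m\<in>M. \<exists>r\<in>R'. Sm m r > 0) \<and>
     (\<forall>r\<in>R'. \<exists>m\<in>M. Sm m r > 0)"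

definition autocatalytic_core ::
  "('s \<Rightarrow> 'r \<Rightarrow> nat) \<Rightarrow> ('s \<Rightarrow> 'r \<Rightarrow> nat) \<Rightarrow> 's set \<Rightarrow> 'r set \<Rightarrow> bool" where
  "autocatalytic_core Sm Sp M R' \<longleftrightarrow>
     excl_autocatalytic Sm Sp M R' \<and>
     (\<forall>M' R''. M' \<subseteq> M \<and> R'' \<subseteq> R' \<and> (M', R'') \<noteq> (M, R') \<longrightarrow>
        \<not> excl_autocatalytic Sm Sp M' R'')"

definition mas_species ::
  "('s \<Rightarrow> 'r \<Rightarrow> nat) \<Rightarrow> ('s \<Rightarrow> 'r \<Rightarrow> nat) \<Rightarrow> 'r set \<Rightarrow> 's set" where
  "mas_species Sm Sp RA = {s. \<exists>r\<in>RA. Sm s r > 0 \<or> Sp s r > 0}"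

definition food_set where
  "food_set Sm Sp RA = {s \<in> mas_species Sm Sp RA. \<forall>r\<in>RA. stoich Sm Sp s r \<le> 0}"

definition waste_set where
  "waste_set Sm Sp RA = {s \<in> mas_species Sm Sp RA. \<forall>r\<in>RA. stoich Sm Sp s r \<ge> 0}"

definition member_set where
  "member_set Sm Sp RA = {s \<in> mas_species Sm Sp RA.
      (\<exists>r\<in>RA. stoich Sm Sp s r > 0) \<and> (\<exists>r\<in>RA. stoich Sm Sp s r < 0)}"

text \<open>Vectors in R^{S_A} are represented as functions 's => real vanishing outside S_A.\<close>
definition unit_vec :: "'s \<Rightarrow> 's \<Rightarrow> real" where
  "unit_vec i = (\<lambda>s. if s = i then 1 else 0)"

definition cone_gen :: "('s \<Rightarrow> real) set \<Rightarrow> ('s \<Rightarrow> real) set" where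
  "cone_gen B = {y. \<exists>c. (\<forall>b\<in>B. c b \<ge> 0) \<and> y = (\<lambda>s. \<Sum>b\<in>B. c b * b s)}"

definition partition_basis ::
  "('s \<Rightarrow> 'r \<Rightarrow> nat) \<Rightarrow> ('s \<Rightarrow> 'r \<Rightarrow> nat) \<Rightarrow> 's set \<Rightarrow> 'r set \<Rightarrow> ('s \<Rightarrow> real) set" where
  "partition_basis Sm Sp AC RA =
     {- unit_vec f | f. f \<in> food_set Sm Sp RA} \<union>
     {unit_vec w | w. w \<in> waste_set Sm Sp RA} \<union>
     {- unit_vec m | m. m \<in> member_set Sm Sp RA - AC} \<union>
     {unit_vec m | m. m \<in> member_set Sm Sp RA - AC} \<union>
     {unit_vec c | c. c \<in> AC}"

definition partition_productive_cone ::
  "('s::finite \<Rightarrow> 'r \<Rightarrow> nat) \<Rightarrow> ('s \<Rightarrow> 'r \<Rightarrow> nat) \<Rightarrow> 's set \<Rightarrow> 'r set \<Rightarrow> ('s \<Rightarrow> real) set" where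
  "partition_productive_cone Sm Sp AC RA =
     cone_gen (partition_basis Sm Sp AC RA) \<inter>
     {y. \<forall>x. conservation_law Sm Sp x \<longrightarrow>
            (\<Sum>s\<in>mas_species Sm Sp RA. x s * y s) = 0}"

text \<open>Species-productive cone P(A) = { Sbar Sbar_C^{-1} u | u >= 0 }, written as
  { Sbar w | Sbar_C w >= 0 }, which is the same set since Sbar_C is invertible.\<close>
definition species_productive_cone ::
  "('s \<Rightarrow> 'r::finite \<Rightarrow> nat) \<Rightarrow> ('s \<Rightarrow> 'r \<Rightarrow> nat) \<Rightarrow> 's set \<Rightarrow> 'r set \<Rightarrow> ('s \<Rightarrow> real) set" where
  "species_productive_cone Sm Sp AC RA =
     {y. \<exists>w::'r \<Rightarrow> real.
          (\<forall>c\<in>AC. (\<Sum>r\<in>RA. stoich Sm Sp c r * w r) \<ge> 0) \<and>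
          y = (\<lambda>s. if s \<in> mas_species Sm Sp RA then (\<Sum>r\<in>RA. stoich Sm Sp s r * w r) else 0)}"

end

theory Submission
  imports Defs "HOL-Analysis.Analysis"
begin

(* Both cones coincide with the set of vectors that vanish outside S_A, are nonnegative on the
   core and are orthogonal to every conservation law.

   For P(A) this rests on the core matrix being invertible, which is forced by minimality of the
   core: moving the positive flux of the core along a nonzero kernel vector until some reaction
   switches off would leave a smaller exclusively autocatalytic motif, and every core species is the
   only core reactant of some reaction, since otherwise it could be dropped from the core.

   Since S_A has a single species s0 outside the core, a positive conservation law determines the
   s0-entry of such a vector from its core entries and makes it nonpositive. Moreover s0 is consumed
   by the autocatalytic flux, so it is a food or non-core member species and -e_s0 generates Q(T). *)

lemma matrix_image_substandard_eq:
  fixes A :: "'a::field^'j::finite^'i::finite"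
  assumes inj: "inj_on ((*v) A) {w. \<forall>j. j \<notin> J \<longrightarrow> w $ j = 0}"
    and into: "(*v) A ` {w. \<forall>j. j \<notin> J \<longrightarrow> w $ j = 0} \<subseteq> {z. \<forall>i. i \<notin> I \<longrightarrow> z $ i = 0}"
    and card: "card I \<le> card J"
  shows "(*v) A ` {w. \<forall>j. j \<notin> J \<longrightarrow> w $ j = 0} = {z. \<forall>i. i \<notin> I \<longrightarrow> z $ i = 0}"
    (is "(*v) A ` ?D = ?V")
proof (rule vec.subspace_dim_equal)
  have span_D: "vec.span ?D = ?D"
    by (rule vec.span_eq_iff[THEN iffD2, OF subspace_substandard_cart])
  have "vec.dim ((*v) A ` ?D) = vec.dim ?D"
    using vec.dim_image_eq[of "(*v) A" ?D] inj unfolding span_D by simp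
  with card show "vec.dim ?V \<le> vec.dim ((*v) A ` ?D)" by (simp add: dim_substandard_cart)
qed (use into in \<open>simp_all add: vec.subspace_image subspace_substandard_cart\<close>)

lemma linear_system_solvable_if_kernel_trivial:
  fixes M :: "'i::finite \<Rightarrow> 'j::finite \<Rightarrow> 'a::field"
  assumes card: "card I \<le> card J"
    and kernel: "\<And>w. \<forall>i\<in>I. (\<Sum>j\<in>J. M i j * w j) = 0 \<Longrightarrow> \<forall>j\<in>J. w j = 0"
  shows "\<exists>w. \<forall>i\<in>I. (\<Sum>j\<in>J. M i j * w j) = u i"
proof -
  define A :: "'a^'j^'i" where "A = (\<chi> i j. if i \<in> I \<and> j \<in> J then M i j else 0)"
  let ?D = "{w :: 'a^'j. \<forall>j. j \<notin> J \<longrightarrow> w $ j = 0}"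
  have A_mult: "(A *v w) $ i = (if i \<in> I then \<Sum>j\<in>J. M i j * w $ j else 0)" for w i
    by (simp add: A_def matrix_vector_mult_def if_distrib[of "\<lambda>x. x * _"] sum.If_cases)
  have "inj_on ((*v) A) ?D"
  proof (rule inj_onI)
    fix w w' assume "w \<in> ?D" "w' \<in> ?D" "A *v w = A *v w'"
    have "(\<Sum>j\<in>J. M i j * (w - w') $ j) = 0" if "i \<in> I" for i
    proof -
      have "(A *v w) $ i = (A *v w') $ i" using \<open>A *v w = A *v w'\<close> by simp
      with that show ?thesis by (simp add: A_mult right_diff_distrib sum_subtractf)
    qed
    then show "w = w'"
      using kernel[of "\<lambda>j. (w - w') $ j"] \<open>w \<in> ?D\<close> \<open>w' \<in> ?D\<close> by (auto simp: vec_eq_iff)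
  qed
  moreover have "(*v) A ` ?D \<subseteq> {z. \<forall>i. i \<notin> I \<longrightarrow> z $ i = 0}" by (auto simp: A_mult)
  ultimately have "(*v) A ` ?D = {z. \<forall>i. i \<notin> I \<longrightarrow> z $ i = 0}"
    using card by (rule matrix_image_substandard_eq)
  then have "(\<chi> i. if i \<in> I then u i else 0) \<in> (*v) A ` ?D" by simp
  then obtain w where w: "(\<chi> i. if i \<in> I then u i else 0) = A *v w" by (rule imageE)
  have "(\<Sum>j\<in>J. M i j * w $ j) = u i" if "i \<in> I" for i
    using that arg_cong[OF w, of "\<lambda>z. z $ i"] by (simp add: A_mult)
  then show ?thesis by blast
qed

lemma cone_gen_nonneg_combination:
  fixes g :: "'i \<Rightarrow> 's \<Rightarrow> real"
  assumes "finite B" "finite I" "g ` I \<subseteq> B" "\<forall>i\<in>I. l i \<ge> 0"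
  shows "(\<lambda>s. \<Sum>i\<in>I. l i * g i s) \<in> cone_gen B"
proof -
  define c where "c b = (\<Sum>i\<in>I. if g i = b then l i else 0)" for b
  have "(\<Sum>b\<in>B. c b * b s) = (\<Sum>i\<in>I. l i * g i s)" for s
  proof -
    have "(\<Sum>b\<in>B. c b * b s) = (\<Sum>i\<in>I. \<Sum>b\<in>B. if g i = b then l i * g i s else 0)"
      unfolding c_def sum_distrib_right by (subst sum.swap) (auto intro!: sum.cong)
    also have "\<dots> = (\<Sum>i\<in>I. l i * g i s)"
      using assms(1,3) by (intro sum.cong) (auto simp: sum.delta)
    finally show ?thesis .
  qed
  moreover have "\<forall>b\<in>B. c b \<ge> 0" unfolding c_def using assms(4) by (auto intro!: sum_nonneg)
  ultimately show ?thesis unfolding cone_gen_def by auto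
qed

lemma cone_gen_nonneg_at:
  assumes "y \<in> cone_gen B" "\<forall>b\<in>B. b s \<ge> 0"
  shows "y s \<ge> 0"
  using assms by (auto simp: cone_gen_def intro!: sum_nonneg)

lemma cone_gen_zero_at:
  assumes "y \<in> cone_gen B" "\<forall>b\<in>B. b s = 0"
  shows "y s = 0"
  using assms by (auto simp: cone_gen_def intro!: sum.neutral)

lemma ray_reaches_orthant_boundary:
  fixes v u :: "'a \<Rightarrow> real"
  assumes "finite R" "\<forall>r\<in>R. v r > 0" "r0 \<in> R" "u r0 < 0"
  shows "\<exists>t. (\<forall>r\<in>R. v r + t * u r \<ge> 0) \<and> (\<exists>r\<in>R. v r + t * u r = 0)"
proof -
  define N where "N = {r\<in>R. u r < 0}"
  define t where "t = Min ((\<lambda>r. v r / - u r) ` N)"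
  have N: "finite N" "r0 \<in> N" using assms by (auto simp: N_def)
  then obtain r1 where r1: "r1 \<in> N" "t = v r1 / - u r1"
    unfolding t_def by (metis (no_types, lifting) Min_in empty_iff finite_imageI image_iff)
  have "t \<ge> 0" using r1 assms(2) by (auto simp: N_def divide_nonneg_neg)
  have "v r + t * u r \<ge> 0" if "r \<in> R" for r
  proof (cases "u r < 0")
    case True
    then have "t \<le> v r / - u r" using N that by (auto simp: t_def N_def)
    moreover have "- u r > 0" using True by simp
    ultimately have "t * - u r \<le> v r" by (metis pos_le_divide_eq)
    then show ?thesis by simp
  next
    case False
    with \<open>t \<ge> 0\<close> assms(2) that show ?thesis by (simp add: add_pos_nonneg less_imp_le)
  qed
  moreover have "v r1 + t * u r1 = 0" using r1 by (simp add: N_def)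
  ultimately show ?thesis using r1(1) by (auto simp: N_def)
qed

lemma stoich_eq_0_if_not_mas_species:
  assumes "s \<notin> mas_species Sm Sp R" "r \<in> R"
  shows "stoich Sm Sp s r = 0"
  using assms by (auto simp: mas_species_def stoich_def)

lemma conservation_law_orthogonal_reaction_combination:
  fixes Sm Sp :: "'s::finite \<Rightarrow> 'r \<Rightarrow> nat"
  assumes "conservation_law Sm Sp x"
  shows "(\<Sum>s\<in>mas_species Sm Sp R. x s * (\<Sum>r\<in>R. stoich Sm Sp s r * w r)) = 0"
proof -
  let ?SA = "mas_species Sm Sp R"
  have law_on_mas_species: "(\<Sum>s\<in>?SA. x s * stoich Sm Sp s r) = 0" if "r \<in> R" for r
  proof -
    have "(\<Sum>s\<in>?SA. x s * stoich Sm Sp s r) = (\<Sum>s\<in>UNIV. x s * stoich Sm Sp s r)"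
      by (rule sum.mono_neutral_left) (auto simp: stoich_eq_0_if_not_mas_species that)
    with assms show ?thesis by (simp add: conservation_law_def)
  qed
  have "(\<Sum>s\<in>?SA. x s * (\<Sum>r\<in>R. stoich Sm Sp s r * w r))
      = (\<Sum>r\<in>R. w r * (\<Sum>s\<in>?SA. x s * stoich Sm Sp s r))"
    by (simp add: sum_distrib_left sum.swap[of _ ?SA] algebra_simps)
  with law_on_mas_species show ?thesis by simp
qed

lemma excl_autocatalytic_subset_mas_species:
  "excl_autocatalytic Sm Sp M R \<Longrightarrow> M \<subseteq> mas_species Sm Sp R"
  by (force simp: excl_autocatalytic_def mas_species_def)

lemma excl_autocatalytic_disjoint_food_set:
  assumes "excl_autocatalytic Sm Sp M R"
  shows "M \<inter> food_set Sm Sp R = {}"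
proof -
  obtain v where v: "\<forall>r\<in>R. v r > 0" "\<forall>m\<in>M. (\<Sum>r\<in>R. stoich Sm Sp m r * v r) > 0"
    using assms unfolding excl_autocatalytic_def by blast
  have "(\<Sum>r\<in>R. stoich Sm Sp f r * v r) \<le> 0" if "f \<in> food_set Sm Sp R" for f
    using that v(1) by (intro sum_nonpos) (auto simp: food_set_def mult_nonpos_nonneg less_imp_le)
  with v(2) show ?thesis by force
qed

lemma excl_autocatalytic_consumes_noncore_species:
  fixes Sm Sp :: "'s::finite \<Rightarrow> 'r \<Rightarrow> nat"
  assumes "excl_autocatalytic Sm Sp M R" "conservation_law Sm Sp x" "\<forall>s. x s > 0"
  shows "\<exists>s\<in>mas_species Sm Sp R - M. \<exists>r\<in>R. stoich Sm Sp s r < 0"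
proof -
  let ?SA = "mas_species Sm Sp R"
  obtain v where v: "\<forall>r\<in>R. v r > 0" "\<forall>m\<in>M. (\<Sum>r\<in>R. stoich Sm Sp m r * v r) > 0"
    and "M \<noteq> {}"
    using assms(1) unfolding excl_autocatalytic_def by blast
  define p where "p s = x s * (\<Sum>r\<in>R. stoich Sm Sp s r * v r)" for s
  have "(\<Sum>s\<in>?SA - M. p s) + (\<Sum>s\<in>M. p s) = (\<Sum>s\<in>?SA. p s)"
    using excl_autocatalytic_subset_mas_species[OF assms(1)] by (simp add: sum.subset_diff)
  also have "\<dots> = 0"
    unfolding p_def by (rule conservation_law_orthogonal_reaction_combination[OF assms(2)])
  finally have "(\<Sum>s\<in>?SA - M. p s) < 0"
    using v(2) assms(3) \<open>M \<noteq> {}\<close> sum_pos[of M p] by (simp add: p_def)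
  then obtain s where s: "s \<in> ?SA - M" "p s < 0"
    by (meson not_less sum_nonneg)
  then have "(\<Sum>r\<in>R. stoich Sm Sp s r * v r) < 0"
    using assms(3)[rule_format, of s] by (simp add: p_def mult_less_0_iff)
  then obtain r where "r \<in> R" "stoich Sm Sp s r * v r < 0"
    by (meson not_less sum_nonneg)
  with v(1) s(1) show ?thesis by (auto simp: mult_less_0_iff)
qed

lemma excl_autocatalytic_on_flux_support:
  assumes "finite R" "M \<noteq> {}" "\<forall>r\<in>R. \<exists>m\<in>M. Sm m r > 0"
    and "\<forall>r\<in>R. v r \<ge> 0" "\<forall>m\<in>M. (\<Sum>r\<in>R. stoich Sm Sp m r * v r) > 0"
  shows "excl_autocatalytic Sm Sp {m\<in>M. \<exists>r\<in>R. v r > 0 \<and> Sm m r > 0} {r\<in>R. v r > 0}"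
    (is "excl_autocatalytic Sm Sp ?M' ?R'")
proof -
  have sum_support: "(\<Sum>r\<in>?R'. stoich Sm Sp m r * v r) = (\<Sum>r\<in>R. stoich Sm Sp m r * v r)" for m
    by (rule sum.mono_neutral_left) (use assms(1,4) in \<open>auto simp: less_le\<close>)
  have reactant: "\<exists>m\<in>?M'. Sm m r > 0" if "r \<in> ?R'" for r
    using assms(3) that by blast
  obtain m0 where "m0 \<in> M" using assms(2) by blast
  then have "?R' \<noteq> {}" using assms(5) sum_support[of m0] by force
  then have "?M' \<noteq> {}" using reactant by blast
  moreover have "\<forall>m\<in>?M'. (\<Sum>r\<in>?R'. stoich Sm Sp m r * v r) > 0"
    using assms(5) sum_support by simp
  ultimately show ?thesis
    unfolding excl_autocatalytic_def using \<open>?R' \<noteq> {}\<close> reactant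
    by (intro conjI exI[of _ v]) auto
qed

lemma autocatalytic_core_minimal:
  assumes "autocatalytic_core Sm Sp M R" "M' \<subseteq> M" "R' \<subseteq> R" "excl_autocatalytic Sm Sp M' R'"
  shows "M' = M \<and> R' = R"
  using assms unfolding autocatalytic_core_def by (metis prod.inject)

lemma autocatalytic_core_kernel_trivial:
  assumes core: "autocatalytic_core Sm Sp AC RA" and "finite RA"
    and kernel: "\<forall>c\<in>AC. (\<Sum>r\<in>RA. stoich Sm Sp c r * u r) = 0"
  shows "\<forall>r\<in>RA. u r = 0"
proof -
  have "excl_autocatalytic Sm Sp AC RA" using core by (simp add: autocatalytic_core_def)
  then obtain v where v: "\<forall>r\<in>RA. v r > 0" "\<forall>m\<in>AC. (\<Sum>r\<in>RA. stoich Sm Sp m r * v r) > 0"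
    and "AC \<noteq> {}" and reactant: "\<forall>r\<in>RA. \<exists>m\<in>AC. Sm m r > 0"
    unfolding excl_autocatalytic_def by blast
  have kernel_nonneg: "\<forall>r\<in>RA. u' r \<ge> 0"
    if kernel': "\<forall>c\<in>AC. (\<Sum>r\<in>RA. stoich Sm Sp c r * u' r) = 0" for u'
  proof (rule ccontr)
    assume "\<not> (\<forall>r\<in>RA. u' r \<ge> 0)"
    then obtain r0 where "r0 \<in> RA" "u' r0 < 0" by (auto simp: not_le)
    then obtain t where t: "\<forall>r\<in>RA. v r + t * u' r \<ge> 0" "\<exists>r\<in>RA. v r + t * u' r = 0"
      using ray_reaches_orthant_boundary[OF \<open>finite RA\<close> v(1)] by blast
    define v' where "v' r = v r + t * u' r" for r
    have productive: "\<forall>m\<in>AC. (\<Sum>r\<in>RA. stoich Sm Sp m r * v' r) > 0"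
    proof
      fix m assume "m \<in> AC"
      have "(\<Sum>r\<in>RA. stoich Sm Sp m r * v' r)
          = (\<Sum>r\<in>RA. stoich Sm Sp m r * v r) + t * (\<Sum>r\<in>RA. stoich Sm Sp m r * u' r)"
        by (simp add: v'_def algebra_simps sum.distrib sum_distrib_left)
      with kernel' v(2) \<open>m \<in> AC\<close> show "(\<Sum>r\<in>RA. stoich Sm Sp m r * v' r) > 0" by simp
    qed
    have nonneg: "\<forall>r\<in>RA. v' r \<ge> 0" using t(1) by (simp add: v'_def)
    have "{r\<in>RA. v' r > 0} = RA"
      using autocatalytic_core_minimal[OF core _ _ excl_autocatalytic_on_flux_support[OF
          \<open>finite RA\<close> \<open>AC \<noteq> {}\<close> reactant nonneg productive]] by auto
    moreover obtain r1 where "r1 \<in> RA" "v' r1 = 0" using t(2) by (auto simp: v'_def)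
    ultimately show False by (metis (mono_tags, lifting) less_irrefl mem_Collect_eq)
  qed
  have "\<forall>c\<in>AC. (\<Sum>r\<in>RA. stoich Sm Sp c r * - u r) = 0"
    using kernel by (simp add: sum_negf)
  then have "\<forall>r\<in>RA. - u r \<ge> 0" by (rule kernel_nonneg)
  with kernel_nonneg[OF kernel] show ?thesis by (auto intro: order_antisym)
qed

(* Removing a core species keeps conditions (i) and (ii) of exclusive autocatalysis, so by
   minimality it must break (iii). *)
lemma autocatalytic_core_private_reaction:
  assumes core: "autocatalytic_core Sm Sp AC RA" and "m \<in> AC"
  shows "\<exists>r\<in>RA. Sm m r > 0 \<and> (\<forall>m'\<in>AC - {m}. Sm m' r = 0)"
proof (rule ccontr)
  assume no_private: "\<not> ?thesis"
  have "excl_autocatalytic Sm Sp AC RA" using core by (simp add: autocatalytic_core_def)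
  then obtain v where flux: "\<forall>r\<in>RA. v r > 0" "\<forall>c\<in>AC. (\<Sum>r\<in>RA. stoich Sm Sp c r * v r) > 0"
    and "RA \<noteq> {}" and reactant: "\<forall>r\<in>RA. \<exists>c\<in>AC. Sm c r > 0"
    and consumed: "\<forall>c\<in>AC. \<exists>r\<in>RA. Sm c r > 0"
    unfolding excl_autocatalytic_def by blast
  have other_reactant: "\<exists>m'\<in>AC - {m}. Sm m' r > 0" if "r \<in> RA" for r
  proof -
    obtain m1 where "m1 \<in> AC" "Sm m1 r > 0" using reactant \<open>r \<in> RA\<close> by blast
    then show ?thesis using no_private \<open>r \<in> RA\<close> by (cases "m1 = m") auto
  qed
  have "excl_autocatalytic Sm Sp (AC - {m}) RA"
    unfolding excl_autocatalytic_def
  proof (intro conjI)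
    show "AC - {m} \<noteq> {}" using other_reactant \<open>RA \<noteq> {}\<close> by blast
    show "\<exists>v. (\<forall>r\<in>RA. v r > 0) \<and> (\<forall>c\<in>AC - {m}. (\<Sum>r\<in>RA. stoich Sm Sp c r * v r) > 0)"
      using flux by blast
  qed (use \<open>RA \<noteq> {}\<close> other_reactant consumed in blast)+
  from autocatalytic_core_minimal[OF core _ _ this] \<open>m \<in> AC\<close> show False by auto
qed

lemma autocatalytic_core_card_le:
  assumes "autocatalytic_core Sm Sp AC RA" "finite RA"
  shows "card AC \<le> card RA"
proof -
  obtain p where p: "\<forall>m\<in>AC. p m \<in> RA \<and> Sm m (p m) > 0 \<and> (\<forall>m'\<in>AC - {m}. Sm m' (p m) = 0)"
    using autocatalytic_core_private_reaction[OF assms(1)] by metis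
  have "inj_on p AC"
  proof (rule inj_onI, rule ccontr)
    fix m1 m2 assume "m1 \<in> AC" "m2 \<in> AC" "p m1 = p m2" "m1 \<noteq> m2"
    then have "Sm m2 (p m1) = 0" "Sm m2 (p m2) > 0" using p by auto
    with \<open>p m1 = p m2\<close> show False by simp
  qed
  with p assms(2) show ?thesis by (intro card_inj_on_le) auto
qed

lemma autocatalytic_core_system_solvable:
  fixes Sm Sp :: "'s::finite \<Rightarrow> 'r::finite \<Rightarrow> nat"
  assumes "autocatalytic_core Sm Sp AC RA"
  shows "\<exists>w. \<forall>c\<in>AC. (\<Sum>r\<in>RA. stoich Sm Sp c r * w r) = u c"
proof (rule linear_system_solvable_if_kernel_trivial)
  show "card AC \<le> card RA" using autocatalytic_core_card_le[OF assms] by simp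
  show "\<forall>r\<in>RA. w r = 0" if "\<forall>c\<in>AC. (\<Sum>r\<in>RA. stoich Sm Sp c r * w r) = 0" for w
    using autocatalytic_core_kernel_trivial[OF assms _ that] by simp
qed

lemma partition_basis_signed_unit_vec:
  assumes "AC \<subseteq> mas_species Sm Sp RA" "b \<in> partition_basis Sm Sp AC RA"
  shows "\<exists>s\<in>mas_species Sm Sp RA. b = unit_vec s \<or> b = - unit_vec s"
  using assms
  by (auto simp: partition_basis_def food_set_def waste_set_def member_set_def)

lemma finite_partition_basis:
  fixes Sm Sp :: "'s::finite \<Rightarrow> 'r \<Rightarrow> nat"
  shows "finite (partition_basis Sm Sp AC RA)"
proof (rule finite_subset)
  show "partition_basis Sm Sp AC RA \<subseteq> range unit_vec \<union> range (\<lambda>s. - unit_vec s)"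
    by (auto simp: partition_basis_def)
qed simp

lemma partition_basis_nonneg_on_core:
  assumes "excl_autocatalytic Sm Sp AC RA" "b \<in> partition_basis Sm Sp AC RA" "c \<in> AC"
  shows "b c \<ge> 0"
  using assms excl_autocatalytic_disjoint_food_set[OF assms(1)]
  by (auto simp: partition_basis_def unit_vec_def)

definition core_nonneg_balanced ::
  "('s::finite \<Rightarrow> 'r \<Rightarrow> nat) \<Rightarrow> ('s \<Rightarrow> 'r \<Rightarrow> nat) \<Rightarrow> 's set \<Rightarrow> 'r set \<Rightarrow> ('s \<Rightarrow> real) set" where
  "core_nonneg_balanced Sm Sp AC RA =
     {y. (\<forall>s. s \<notin> mas_species Sm Sp RA \<longrightarrow> y s = 0) \<and> (\<forall>c\<in>AC. y c \<ge> 0) \<and>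
         (\<forall>x. conservation_law Sm Sp x \<longrightarrow> (\<Sum>s\<in>mas_species Sm Sp RA. x s * y s) = 0)}"

locale single_noncore_species =
  fixes Sm Sp :: "'s::finite \<Rightarrow> 'r::finite \<Rightarrow> nat" and AC :: "'s set" and RA :: "'r set"
    and s0 :: 's and x0 :: "'s \<Rightarrow> real"
  assumes core: "autocatalytic_core Sm Sp AC RA"
    and positive_law: "conservation_law Sm Sp x0" "\<forall>s. x0 s > 0"
    and mas_species_eq: "mas_species Sm Sp RA = insert s0 AC"
    and s0_not_core: "s0 \<notin> AC"
begin

lemma core_excl_autocatalytic: "excl_autocatalytic Sm Sp AC RA"
  using core by (simp add: autocatalytic_core_def)

lemma value_at_s0:
  assumes "(\<Sum>s\<in>mas_species Sm Sp RA. x0 s * y s) = 0"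
  shows "x0 s0 * y s0 = - (\<Sum>c\<in>AC. x0 c * y c)"
  using assms s0_not_core by (simp add: mas_species_eq)

lemma core_nonneg_balanced_nonpos_at_s0:
  assumes "y \<in> core_nonneg_balanced Sm Sp AC RA"
  shows "y s0 \<le> 0"
proof -
  have "(\<Sum>c\<in>AC. x0 c * y c) \<ge> 0"
    using assms positive_law(2) by (auto simp: core_nonneg_balanced_def less_imp_le intro!: sum_nonneg)
  moreover have "x0 s0 * y s0 = - (\<Sum>c\<in>AC. x0 c * y c)"
    using assms positive_law(1) by (intro value_at_s0) (simp add: core_nonneg_balanced_def)
  ultimately have "x0 s0 * y s0 \<le> 0" by simp
  with positive_law(2)[rule_format, of s0] show ?thesis by (simp add: mult_le_0_iff)
qed

lemma neg_unit_vec_s0_in_partition_basis: "- unit_vec s0 \<in> partition_basis Sm Sp AC RA"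
proof -
  obtain r where "r \<in> RA" "stoich Sm Sp s0 r < 0"
    using excl_autocatalytic_consumes_noncore_species[OF core_excl_autocatalytic positive_law] mas_species_eq
    by auto
  then have "s0 \<in> food_set Sm Sp RA \<union> (member_set Sm Sp RA - AC)"
    using mas_species_eq s0_not_core by (auto simp: food_set_def member_set_def not_le)
  then show ?thesis by (auto simp: partition_basis_def)
qed

lemma species_productive_cone_eq:
  "species_productive_cone Sm Sp AC RA = core_nonneg_balanced Sm Sp AC RA"
proof (intro equalityI subsetI)
  fix y assume "y \<in> species_productive_cone Sm Sp AC RA"
  then obtain w where w: "\<forall>c\<in>AC. (\<Sum>r\<in>RA. stoich Sm Sp c r * w r) \<ge> 0"
    and y: "y = (\<lambda>s. if s \<in> mas_species Sm Sp RA then \<Sum>r\<in>RA. stoich Sm Sp s r * w r else 0)"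
    unfolding species_productive_cone_def by blast
  have "(\<Sum>s\<in>mas_species Sm Sp RA. x s * y s) = 0" if "conservation_law Sm Sp x" for x
    using conservation_law_orthogonal_reaction_combination[OF that, where R = RA and w = w] by (simp add: y)
  with w show "y \<in> core_nonneg_balanced Sm Sp AC RA"
    by (auto simp: core_nonneg_balanced_def y mas_species_eq)
next
  fix y assume y: "y \<in> core_nonneg_balanced Sm Sp AC RA"
  obtain w where w: "\<forall>c\<in>AC. (\<Sum>r\<in>RA. stoich Sm Sp c r * w r) = y c"
    using autocatalytic_core_system_solvable[OF core] by blast
  define z where "z s = (if s \<in> mas_species Sm Sp RA then \<Sum>r\<in>RA. stoich Sm Sp s r * w r else 0)" for s
  have z_core: "z c = y c" if "c \<in> AC" for c
    using w that by (simp add: z_def mas_species_eq)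
  have "x0 s0 * z s0 = - (\<Sum>c\<in>AC. x0 c * z c)"
    using conservation_law_orthogonal_reaction_combination[OF positive_law(1), where R = RA and w = w]
    by (intro value_at_s0) (simp add: z_def)
  also have "\<dots> = - (\<Sum>c\<in>AC. x0 c * y c)" using z_core by simp
  also have "\<dots> = x0 s0 * y s0"
    using y positive_law(1) by (intro value_at_s0[symmetric]) (simp add: core_nonneg_balanced_def)
  finally have "z s0 = y s0" using positive_law(2) by (metis less_irrefl mult_left_cancel)
  then have "y = z"
    using y z_core by (auto simp: fun_eq_iff core_nonneg_balanced_def z_def mas_species_eq)
  with w y show "y \<in> species_productive_cone Sm Sp AC RA"
    unfolding species_productive_cone_def core_nonneg_balanced_def z_def by auto
qed

lemma partition_productive_cone_eq:
  "partition_productive_cone Sm Sp AC RA = core_nonneg_balanced Sm Sp AC RA"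
proof (intro equalityI subsetI)
  fix y assume "y \<in> partition_productive_cone Sm Sp AC RA"
  then have cone: "y \<in> cone_gen (partition_basis Sm Sp AC RA)"
    and orth: "\<forall>x. conservation_law Sm Sp x \<longrightarrow> (\<Sum>s\<in>mas_species Sm Sp RA. x s * y s) = 0"
    unfolding partition_productive_cone_def by auto
  have "AC \<subseteq> mas_species Sm Sp RA" by (simp add: mas_species_eq subset_insertI)
  then have "y s = 0" if "s \<notin> mas_species Sm Sp RA" for s
    using cone_gen_zero_at[OF cone] partition_basis_signed_unit_vec that
    by (fastforce simp: unit_vec_def)
  moreover have "y c \<ge> 0" if "c \<in> AC" for c
    using cone_gen_nonneg_at[OF cone] partition_basis_nonneg_on_core[OF core_excl_autocatalytic _ that] by blast
  ultimately show "y \<in> core_nonneg_balanced Sm Sp AC RA"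
    using orth by (simp add: core_nonneg_balanced_def)
next
  fix y assume y: "y \<in> core_nonneg_balanced Sm Sp AC RA"
  define g where "g s = (if s = s0 then - unit_vec s0 else unit_vec s)" for s
  define l where "l s = (if s = s0 then - y s0 else y s)" for s
  have "(\<lambda>s. \<Sum>i\<in>mas_species Sm Sp RA. l i * g i s) \<in> cone_gen (partition_basis Sm Sp AC RA)"
  proof (rule cone_gen_nonneg_combination)
    show "g ` mas_species Sm Sp RA \<subseteq> partition_basis Sm Sp AC RA"
      using neg_unit_vec_s0_in_partition_basis
      by (auto simp: g_def mas_species_eq partition_basis_def)
    show "\<forall>i\<in>mas_species Sm Sp RA. l i \<ge> 0"
      using y core_nonneg_balanced_nonpos_at_s0[OF y]
      by (auto simp: l_def mas_species_eq core_nonneg_balanced_def)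
  qed (simp_all add: finite_partition_basis)
  moreover have "(\<lambda>s. \<Sum>i\<in>mas_species Sm Sp RA. l i * g i s) = y"
  proof
    fix s
    have "(\<Sum>i\<in>mas_species Sm Sp RA. l i * g i s)
        = (\<Sum>i\<in>mas_species Sm Sp RA. if s = i then y i else 0)"
      by (intro sum.cong) (auto simp: l_def g_def unit_vec_def)
    also have "\<dots> = y s" using y by (simp add: core_nonneg_balanced_def)
    finally show "(\<Sum>i\<in>mas_species Sm Sp RA. l i * g i s) = y s" .
  qed
  ultimately show "y \<in> partition_productive_cone Sm Sp AC RA"
    using y unfolding partition_productive_cone_def core_nonneg_balanced_def by auto
qed

end

theorem mainTheorem10:
  fixes Sm Sp :: "'s::finite \<Rightarrow> 'r::finite \<Rightarrow> nat"
    and AC :: "'s set" and RA :: "'r set"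
  assumes "\<exists>x. conservation_law Sm Sp x \<and> (\<forall>s. x s > 0)"
    and "autocatalytic_core Sm Sp AC RA"
    and "\<forall>M. autocatalytic_core Sm Sp M RA \<longrightarrow> M = AC"
    and "card (mas_species Sm Sp RA) = card AC + 1"
  shows "species_productive_cone Sm Sp AC RA = partition_productive_cone Sm Sp AC RA"
proof -
  obtain x0 where law: "conservation_law Sm Sp x0" "\<forall>s. x0 s > 0" using assms(1) by blast
  have core_species: "AC \<subseteq> mas_species Sm Sp RA"
    using assms(2) by (simp add: autocatalytic_core_def excl_autocatalytic_subset_mas_species)
  then have "card (mas_species Sm Sp RA - AC) = 1" using assms(4) by (simp add: card_Diff_subset)
  then obtain s0 where s0: "mas_species Sm Sp RA - AC = {s0}" by (rule card_1_singletonE)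
  interpret single_noncore_species Sm Sp AC RA s0 x0
    using assms(2) law core_species s0 by unfold_locales auto
  show ?thesis by (simp add: species_productive_cone_eq partition_productive_cone_eq)
qed

end
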